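(* Let $A_3^*$ be the set of nonnegative integers whose base-$3$ expansion contains no digit $2$, and let $G_3^*$ be the set of positive integers $k$ such that $v_p(k) \in A_3^*$ for every prime $p$ dividing $k$. Then the upper uniform density of $G_3^*$ equals its asymptotic density: $\overline{u}(G_3^* ) = d(G_3^* )$.
   Context: $G_3^*$ is (by Rankin's characterization) the greedy set of positive integers free of 3-term geometric progressions. For $A\subseteq\mathbb{N}$: the asymptotic density is $d(A)=\lim_{N\to\infty}\frac{|A\cap\{1,\dots,N\}|}{N}$ when it exists (for $G_3^*$ it exists and equals $\prod_p (1-\frac1p)\sum_{i\in A_3^*} p^{-i}$); the upper uniform density is $\overline{u}(A) = \lim_{s\to\infty} \max_{n\ge 0} \frac{1}{s}\,\#\{a\in A : n < a \le n+s\}$. *)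

theory Defs
  imports "HOL-Analysis.Analysis" "HOL-Computational_Algebra.Primes"
begin

definition A3star :: "nat set" where
  "A3star = {n. \<forall>k::nat. (n div 3 ^ k) mod 3 \<noteq> 2}"

definition G3star :: "nat set" where
  "G3star = {k. k > 0 \<and> (\<forall>p::nat. prime p \<and> p dvd k \<longrightarrow> multiplicity p k \<in> A3star)}"

definition density_seq :: "nat set \<Rightarrow> nat \<Rightarrow> real" where
  "density_seq A N = real (card (A \<inter> {1..N})) / real N"

text \<open>Counting function for the upper uniform density:
  max over n \<ge> 0 of |A \<inter> (n, n+s]| / s (the maximum exists since the counts are bounded by s).\<close>
definition uniform_seq :: "nat set \<Rightarrow> nat \<Rightarrow> real" where
  "uniform_seq A s = real (Max {card (A \<inter> {n<..n+s}) | n. True}) / real s"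

end

theory Submission
  imports Defs "HOL-Real_Asymp.Real_Asymp"
begin

text \<open>Imposing the
  condition only for primes \<open>p \<le> m\<close> and only on exponents below m yields a superset of
  \<open>G\<^sub>3\<^sup>*\<close> that is periodic with period \<open>(m!)\<^sup>m\<close>; for a periodic set every window of
  length s contains s times its density elements, up to one period. The surplus of the
  approximating set consists of multiples of \<open>p\<^sup>2\<close> with \<open>p > m\<close> or of \<open>p\<^sup>m\<close> with
  \<open>p \<le> m\<close>, which has upper density at most \<open>1/m + m/2\<^sup>m\<close>. So the density and the upper
  uniform density of \<open>G\<^sub>3\<^sup>*\<close> are both squeezed onto the infimum of the densities of
  the approximating sets.\<close>

definition window_count :: "nat set \<Rightarrow> nat \<Rightarrow> nat \<Rightarrow> nat" where
  "window_count S n s = card (S \<inter> {n<..n+s})"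

lemma window_count_le: "window_count S n s \<le> s"
proof -
  have "window_count S n s \<le> card {n<..n+s}" unfolding window_count_def by (rule card_mono) auto
  thus ?thesis by simp
qed

lemma window_count_mono: "S \<subseteq> T \<Longrightarrow> window_count S n s \<le> window_count T n s"
  unfolding window_count_def by (rule card_mono) auto

lemma window_count_add:
  "window_count S n (s + t) = window_count S n s + window_count S (n + s) t"
proof -
  have "S \<inter> {n<..n+(s+t)} = (S \<inter> {n<..n+s}) \<union> (S \<inter> {n+s<..n+s+t})" by auto
  thus ?thesis unfolding window_count_def by (subst card_Un_disjoint[symmetric]) auto
qed

lemma window_count_one: "window_count S n 1 = (if Suc n \<in> S then 1 else 0)"
proof -
  have "{n<..n+1} = {Suc n}" by auto
  thus ?thesis by (simp add: window_count_def)
qed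

lemma window_count_periodic_shift:
  assumes per: "\<And>k. k + M \<in> S \<longleftrightarrow> k \<in> S"
  shows "window_count S n M = window_count S 0 M"
proof (induction n)
  case (Suc n)
  have "window_count S n M + window_count S (n + M) 1 = window_count S n 1 + window_count S (Suc n) M"
    using window_count_add[of S n M 1] window_count_add[of S n 1 M] by simp
  moreover have "window_count S (n + M) 1 = window_count S n 1"
    using per[of "Suc n"] unfolding window_count_one by simp
  ultimately show ?case using Suc.IH by simp
qed simp

lemma window_count_periods:
  assumes per: "\<And>k. k + M \<in> S \<longleftrightarrow> k \<in> S"
  shows "window_count S n (q * M) = q * window_count S 0 M"
proof (induction q)
  case (Suc q)
  show ?case
    using window_count_add[of S n "q * M" M] window_count_periodic_shift[OF per] Suc.IH
    by (simp add: add.commute)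
qed (simp add: window_count_def)

definition period_density :: "nat set \<Rightarrow> nat \<Rightarrow> real" where
  "period_density S M = real (window_count S 0 M) / real M"

lemma period_density_bounds: "0 \<le> period_density S M" "period_density S M \<le> 1"
  using window_count_le[of S 0 M] by (auto simp: period_density_def divide_le_eq_1)

lemma window_count_periodic_bounds:
  assumes per: "\<And>k. k + M \<in> S \<longleftrightarrow> k \<in> S" and M: "M > 0"
  shows "\<bar>real (window_count S n s) - period_density S M * s\<bar> \<le> M"
proof -
  define q r where "q = s div M" and "r = s mod M"
  have s: "s = q * M + r" and r: "r < M" using M by (simp_all add: q_def r_def)
  have count: "window_count S n s = q * window_count S 0 M + window_count S (n + q * M) r"
    using window_count_add[of S n "q * M" r] window_count_periods[OF per] s by simp
  have "period_density S M * s = q * window_count S 0 M + period_density S M * r"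
    using M by (simp add: period_density_def s field_simps)
  hence "real (window_count S n s) - period_density S M * s
      = real (window_count S (n + q * M) r) - period_density S M * r"
    using count by simp
  moreover have "0 \<le> period_density S M * r" "period_density S M * r \<le> r"
    using period_density_bounds[of S M] by (simp_all add: mult_left_le_one_le)
  moreover have "real (window_count S (n + q * M) r) \<le> r" using window_count_le by simp
  ultimately show ?thesis using r by (simp add: abs_le_iff)
qed

lemma density_seq_window_count: "density_seq A N = real (window_count A 0 N) / real N"
proof -
  have "{0<..0+N} = {1..N}" by auto
  thus ?thesis by (simp add: density_seq_def window_count_def)
qed

lemma uniform_seq_window_count:
  "uniform_seq A s = real (Max (range (\<lambda>n. window_count A n s))) / real s"
proof -
  have "{card (A \<inter> {n<..n+s}) | n. True} = range (\<lambda>n. window_count A n s)"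
    by (auto simp: window_count_def)
  thus ?thesis by (simp add: uniform_seq_def)
qed

lemma finite_window_counts: "finite (range (\<lambda>n. window_count A n s))"
  by (rule finite_subset[of _ "{..s}"]) (auto simp: window_count_le)

lemma density_seq_le_uniform_seq: "density_seq A s \<le> uniform_seq A s"
proof -
  have "window_count A 0 s \<le> Max (range (\<lambda>n. window_count A n s))"
    using finite_window_counts by (intro Max_ge) auto
  thus ?thesis
    by (simp add: density_seq_window_count uniform_seq_window_count divide_right_mono)
qed

lemma uniform_seq_le:
  assumes "\<And>n. real (window_count A n s) \<le> B"
  shows "uniform_seq A s \<le> B / real s"
proof -
  obtain n where "Max (range (\<lambda>n. window_count A n s)) = window_count A n s"
    using Max_in[OF finite_window_counts] by auto
  thus ?thesis using assms[of n] by (simp add: uniform_seq_window_count divide_right_mono)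
qed

lemma eventually_uniform_seq_less:
  assumes "A \<subseteq> S" and per: "\<And>k. k + M \<in> S \<longleftrightarrow> k \<in> S" and "M > 0"
    and "period_density S M < a"
  shows "eventually (\<lambda>s. uniform_seq A s < a) sequentially"
proof -
  have bound: "uniform_seq A s \<le> period_density S M + M / s" if "s > 0" for s
  proof -
    have "real (window_count A n s) \<le> period_density S M * s + M" for n
      using window_count_mono[OF \<open>A \<subseteq> S\<close>, of n s]
        window_count_periodic_bounds[OF per \<open>M > 0\<close>, of n s] by linarith
    hence "uniform_seq A s \<le> (period_density S M * s + M) / s" by (rule uniform_seq_le)
    thus ?thesis using that by (simp add: add_divide_distrib)
  qed
  have "(\<lambda>s. period_density S M + M / real s) \<longlonglongrightarrow> period_density S M + 0"
    by (intro tendsto_add tendsto_const lim_const_over_n)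
  hence "eventually (\<lambda>s. period_density S M + M / real s < a) sequentially"
    using assms(4) by (intro order_tendstoD(2)) auto
  with eventually_gt_at_top[of 0] show ?thesis
    by eventually_elim (rule le_less_trans[OF bound])
qed

lemma eventually_less_density_seq:
  assumes "A \<subseteq> S" and per: "\<And>k. k + M \<in> S \<longleftrightarrow> k \<in> S" and "M > 0"
    and excess: "\<And>N. real (card ((S - A) \<inter> {1..N})) \<le> e * N"
    and "a < period_density S M - e"
  shows "eventually (\<lambda>N. a < density_seq A N) sequentially"
proof -
  have bound: "period_density S M - M / N - e \<le> density_seq A N" if "N > 0" for N
  proof -
    have "window_count S 0 N \<le> card ((A \<inter> {0<..0+N}) \<union> ((S - A) \<inter> {1..N}))"
      unfolding window_count_def by (rule card_mono) auto
    also have "\<dots> \<le> window_count A 0 N + card ((S - A) \<inter> {1..N})"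
      unfolding window_count_def by (rule card_Un_le)
    finally have "window_count S 0 N \<le> window_count A 0 N + card ((S - A) \<inter> {1..N})" .
    hence "period_density S M * N - M - e * N \<le> window_count A 0 N"
      using window_count_periodic_bounds[OF per \<open>M > 0\<close>, of 0 N] excess[of N] by linarith
    hence "(period_density S M * N - M - e * N) / N \<le> density_seq A N"
      by (simp add: density_seq_window_count divide_right_mono)
    moreover have "(period_density S M * N - M - e * N) / N = period_density S M - M / N - e"
      using that by (simp add: field_simps)
    ultimately show ?thesis by simp
  qed
  have "(\<lambda>N. period_density S M - M / real N - e) \<longlonglongrightarrow> period_density S M - 0 - e"
    by (intro tendsto_diff tendsto_const lim_const_over_n)
  hence "eventually (\<lambda>N. a < period_density S M - M / real N - e) sequentially"
    using assms(5) by (intro order_tendstoD(1)) auto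
  with eventually_gt_at_top[of 0] show ?thesis
    by eventually_elim (rule less_le_trans[OF _ bound])
qed

theorem uniform_density_eq_density_of_periodic_approx:
  fixes A :: "nat set" and S :: "nat \<Rightarrow> nat set" and M :: "nat \<Rightarrow> nat" and e :: "nat \<Rightarrow> real"
  assumes sub: "\<And>m. A \<subseteq> S m" and per: "\<And>m k. k + M m \<in> S m \<longleftrightarrow> k \<in> S m"
    and pos: "\<And>m. M m > 0"
    and excess: "\<And>m N. real (card ((S m - A) \<inter> {1..N})) \<le> e m * N"
    and e: "e \<longlonglongrightarrow> 0"
  defines "d \<equiv> Inf (range (\<lambda>m. period_density (S m) (M m)))"
  shows "density_seq A \<longlonglongrightarrow> d" and "uniform_seq A \<longlonglongrightarrow> d"
proof -
  have bdd: "bdd_below (range (\<lambda>m. period_density (S m) (M m)))"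
    using period_density_bounds(1) by (intro bdd_belowI[of _ 0]) auto
  have upper: "eventually (\<lambda>s. uniform_seq A s < a) sequentially" if da: "d < a" for a
  proof -
    obtain m where "period_density (S m) (M m) < a"
      using da bdd unfolding d_def by (subst (asm) cInf_less_iff) auto
    thus ?thesis by (rule eventually_uniform_seq_less[OF sub per pos])
  qed
  have lower: "eventually (\<lambda>N. a < density_seq A N) sequentially" if "a < d" for a
  proof -
    have "eventually (\<lambda>m. e m < d - a) sequentially"
      using that by (intro order_tendstoD(2)[OF e]) auto
    then obtain m where "e m < d - a" by (auto simp: eventually_sequentially)
    moreover have "d \<le> period_density (S m) (M m)"
      unfolding d_def using bdd by (intro cInf_lower) auto
    ultimately show ?thesis
      by (intro eventually_less_density_seq[OF sub[of m] per[where m = m] pos[of m] excess[of m]]) auto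
  qed
  show "density_seq A \<longlonglongrightarrow> d"
  proof (rule order_tendstoI)
    fix a assume "d < a"
    from upper[OF this] show "eventually (\<lambda>N. density_seq A N < a) sequentially"
      by eventually_elim (rule le_less_trans[OF density_seq_le_uniform_seq])
  qed (rule lower)
  show "uniform_seq A \<longlonglongrightarrow> d"
  proof (rule order_tendstoI)
    fix a assume "a < d"
    from lower[OF this] show "eventually (\<lambda>s. a < uniform_seq A s) sequentially"
      by eventually_elim (rule less_le_trans[OF _ density_seq_le_uniform_seq])
  qed (rule upper)
qed

lemma card_multiples_le:
  assumes "q > 0"
  shows "real (card ({k. q dvd k} \<inter> {1..N})) \<le> real N / real q"
proof -
  have "{k. q dvd k} \<inter> {1..N} \<subseteq> (\<lambda>i. q * i) ` {1..N div q}"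
  proof
    fix k assume "k \<in> {k. q dvd k} \<inter> {1..N}"
    then obtain i where k: "k = q * i" "1 \<le> k" "k \<le> N" by auto
    hence "1 \<le> i" "i \<le> N div q"
      using assms by (auto simp: less_eq_div_iff_mult_less_eq mult.commute intro: Suc_leI)
    thus "k \<in> (\<lambda>i. q * i) ` {1..N div q}" using k by auto
  qed
  hence "card ({k. q dvd k} \<inter> {1..N}) \<le> card ((\<lambda>i. q * i) ` {1..N div q})"
    by (intro card_mono) auto
  also have "\<dots> \<le> N div q" using card_image_le[of "{1..N div q}" "\<lambda>i. q * i"] by simp
  finally have "real (card ({k. q dvd k} \<inter> {1..N})) \<le> real (N div q)" by simp
  thus ?thesis using of_nat_div_le_of_nat[where 'a = real, of N q] by linarith
qed

lemma sum_inverse_squares_tail_le: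
  assumes "1 \<le> m"
  shows "(\<Sum>p\<in>{m<..n}. 1 / real p ^ 2) \<le> 1 / real m"
proof (cases "m \<le> n")
  case True
  have "(\<Sum>p\<in>{m<..n}. 1 / real p ^ 2) \<le> 1 / real m - 1 / real n"
    using True
  proof (induction n rule: dec_induct)
    case (step k)
    have k: "1 \<le> k" using assms step.hyps(1) by simp
    have "1 / real (Suc k) ^ 2 \<le> 1 / (real k * real (Suc k))"
      using k by (intro divide_left_mono) (auto simp: power2_eq_square)
    also have "\<dots> = 1 / real k - 1 / real (Suc k)" using k by (simp add: field_simps)
    finally have "1 / real (Suc k) ^ 2 \<le> 1 / real k - 1 / real (Suc k)" .
    moreover have "{m<..Suc k} = insert (Suc k) {m<..k}" using step.hyps by auto
    ultimately show ?case using step.IH by simp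
  qed simp
  thus ?thesis by (rule order.trans) simp
qed simp

text \<open>Phrased with divisibility rather than multiplicity so that membership visibly depends
  only on k modulo \<open>(m!)\<^sup>m\<close>; \<open>mem_G3star_approx_iff\<close> gives the reading in terms of \<open>v\<^sub>p(k)\<close>.\<close>
definition G3star_approx :: "nat \<Rightarrow> nat set" where
  "G3star_approx m = {k. \<forall>p. prime p \<and> p \<le> m \<longrightarrow> p ^ m dvd k \<or>
      (\<exists>j\<in>A3star. j < m \<and> p ^ j dvd k \<and> \<not> p ^ Suc j dvd k)}"

lemma power_dvd_fact_power:
  assumes "0 < p" "p \<le> m" "j \<le> m"
  shows "p ^ j dvd fact m ^ m"
proof -
  have "p ^ m dvd fact m ^ m" using assms by (intro dvd_power_same dvd_fact) auto
  moreover have "p ^ j dvd p ^ m" using assms(3) by (rule le_imp_power_dvd)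
  ultimately show ?thesis by (rule dvd_trans[rotated])
qed

lemma G3star_approx_periodic: "k + fact m ^ m \<in> G3star_approx m \<longleftrightarrow> k \<in> G3star_approx m"
proof -
  have shift: "p ^ j dvd k + fact m ^ m \<longleftrightarrow> p ^ j dvd k" if "prime p" "p \<le> m" "j \<le> m" for p j
    using power_dvd_fact_power[of p m j] that prime_gt_0_nat by (simp add: dvd_add_left_iff)
  have "p ^ j dvd k + fact m ^ m \<longleftrightarrow> p ^ j dvd k" "p ^ Suc j dvd k + fact m ^ m \<longleftrightarrow> p ^ Suc j dvd k"
    if "prime p" "p \<le> m" "j < m" for p j
    using that shift[of p j] shift[of p "Suc j"] by simp_all
  thus ?thesis unfolding G3star_approx_def using shift by auto
qed

lemma zero_in_A3star: "0 \<in> A3star"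
  by (simp add: A3star_def)

lemma one_in_A3star: "1 \<in> A3star"
  unfolding A3star_def
proof (intro CollectI allI)
  fix k :: nat
  show "(1 div 3 ^ k) mod 3 \<noteq> (2::nat)"
  proof (cases k)
    case (Suc i)
    have "(1::nat) < 3 ^ Suc i" by (rule one_less_power) auto
    thus ?thesis using Suc by simp
  qed simp
qed

lemma mem_G3star_approx_iff:
  assumes "k \<noteq> 0"
  shows "k \<in> G3star_approx m \<longleftrightarrow>
    (\<forall>p. prime p \<and> p \<le> m \<longrightarrow> m \<le> multiplicity p k \<or> multiplicity p k \<in> A3star)"
proof -
  have "(p ^ m dvd k \<or> (\<exists>j\<in>A3star. j < m \<and> p ^ j dvd k \<and> \<not> p ^ Suc j dvd k)) \<longleftrightarrow>
      m \<le> multiplicity p k \<or> multiplicity p k \<in> A3star" if "prime p" for p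
  proof -
    define v where "v = multiplicity p k"
    have dvd_iff: "p ^ n dvd k \<longleftrightarrow> n \<le> v" for n
      unfolding v_def using assms that by (intro power_dvd_iff_le_multiplicity) auto
    have "(\<exists>j\<in>A3star. j < m \<and> j \<le> v \<and> \<not> Suc j \<le> v) \<longleftrightarrow> v \<in> A3star \<and> v < m"
      by (metis le_antisym not_less_eq_eq order_refl)
    thus ?thesis unfolding dvd_iff v_def[symmetric] by auto
  qed
  thus ?thesis unfolding G3star_approx_def by auto
qed

lemma G3star_subset_approx: "G3star \<subseteq> G3star_approx m"
proof
  fix k assume k: "k \<in> G3star"
  have "multiplicity p k \<in> A3star" if "prime p" for p
    using k that zero_in_A3star not_dvd_imp_multiplicity_0[of p k]
    by (cases "p dvd k") (auto simp: G3star_def)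
  moreover have "k \<noteq> 0" using k by (simp add: G3star_def)
  ultimately show "k \<in> G3star_approx m" by (simp add: mem_G3star_approx_iff)
qed

lemma approx_minus_G3star_witness:
  assumes "k \<in> G3star_approx m - G3star" and "k > 0"
  obtains p where "prime p" "m < p" "p ^ 2 dvd k" | p where "prime p" "p \<le> m" "p ^ m dvd k"
proof -
  obtain p where p: "prime p" "multiplicity p k \<notin> A3star"
    using assms by (auto simp: G3star_def)
  have "multiplicity p k \<noteq> 0" "multiplicity p k \<noteq> 1"
    by (metis p(2) zero_in_A3star) (metis p(2) one_in_A3star)
  hence "2 \<le> multiplicity p k" by linarith
  hence p2: "p ^ 2 dvd k" by (rule multiplicity_dvd')
  show ?thesis
  proof (cases "m < p")
    case False
    hence "m \<le> multiplicity p k" using assms p by (auto simp: mem_G3star_approx_iff)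
    hence "p ^ m dvd k" by (rule multiplicity_dvd')
    thus ?thesis using False p(1) that(2) by simp
  qed (use p(1) p2 that(1) in blast)
qed

lemma card_approx_minus_G3star_le:
  assumes "1 \<le> m"
  shows "real (card ((G3star_approx m - G3star) \<inter> {1..N})) \<le> (1 / m + m / 2 ^ m) * N"
proof -
  define I J where "I = {m<..N}" and "J = {2..m}"
  define multiples where "multiples q = {k. q dvd k} \<inter> {1..N}" for q :: nat
  have "(G3star_approx m - G3star) \<inter> {1..N} \<subseteq>
      (\<Union>p\<in>I. multiples (p ^ 2)) \<union> (\<Union>p\<in>J. multiples (p ^ m))"
  proof
    fix k assume k: "k \<in> (G3star_approx m - G3star) \<inter> {1..N}"
    hence "k \<in> G3star_approx m - G3star" "k > 0" by auto
    thus "k \<in> (\<Union>p\<in>I. multiples (p ^ 2)) \<union> (\<Union>p\<in>J. multiples (p ^ m))"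
    proof (cases rule: approx_minus_G3star_witness)
      case (1 p)
      have "p \<le> p ^ 2" by (simp add: power2_eq_square)
      also have "\<dots> \<le> k" using 1(3) \<open>k > 0\<close> by (rule dvd_imp_le)
      finally show ?thesis using 1 k by (auto simp: I_def multiples_def)
    next
      case (2 p)
      thus ?thesis using k prime_ge_2_nat[of p] by (auto simp: J_def multiples_def)
    qed
  qed
  hence "card ((G3star_approx m - G3star) \<inter> {1..N}) \<le>
      card ((\<Union>p\<in>I. multiples (p ^ 2)) \<union> (\<Union>p\<in>J. multiples (p ^ m)))"
    by (intro card_mono) (auto simp: I_def J_def multiples_def)
  also have "\<dots> \<le> (\<Sum>p\<in>I. card (multiples (p ^ 2))) + (\<Sum>p\<in>J. card (multiples (p ^ m)))"
    by (intro order.trans[OF card_Un_le] add_mono card_UN_le) (simp_all add: I_def J_def)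
  finally have "real (card ((G3star_approx m - G3star) \<inter> {1..N})) \<le>
      (\<Sum>p\<in>I. real (card (multiples (p ^ 2)))) + (\<Sum>p\<in>J. real (card (multiples (p ^ m))))"
    by (metis of_nat_add of_nat_le_iff of_nat_sum)
  also have "(\<Sum>p\<in>I. real (card (multiples (p ^ 2)))) \<le> (\<Sum>p\<in>I. N * (1 / real p ^ 2))"
  proof (rule sum_mono)
    fix p assume "p \<in> I"
    hence "p > 0" using assms by (simp add: I_def)
    thus "real (card (multiples (p ^ 2))) \<le> N * (1 / real p ^ 2)"
      using card_multiples_le[of "p ^ 2" N] by (simp add: multiples_def)
  qed
  also have "\<dots> \<le> N * (1 / m)"
    unfolding I_def sum_distrib_left[symmetric]
    by (intro mult_left_mono sum_inverse_squares_tail_le assms) simp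
  also have "(\<Sum>p\<in>J. real (card (multiples (p ^ m)))) \<le> (\<Sum>p\<in>J. N / 2 ^ m)"
  proof (rule sum_mono)
    fix p assume "p \<in> J"
    hence "(2::real) ^ m \<le> real p ^ m" by (intro power_mono) (auto simp: J_def)
    hence "real N / real (p ^ m) \<le> N / 2 ^ m"
      using \<open>p \<in> J\<close> by (intro divide_left_mono) (auto simp: J_def)
    thus "real (card (multiples (p ^ m))) \<le> N / 2 ^ m"
      using card_multiples_le[of "p ^ m" N] \<open>p \<in> J\<close> by (simp add: J_def multiples_def)
  qed
  also have "\<dots> \<le> m * (N / 2 ^ m)"
    unfolding sum_constant by (intro mult_right_mono) (auto simp: J_def)
  finally show ?thesis by (simp add: algebra_simps)
qed

theorem mainTheorem2:
  shows "\<exists>d::real. density_seq G3star \<longlonglongrightarrow> d \<and> uniform_seq G3star \<longlonglongrightarrow> d"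
proof -
  define S M e where "S m = G3star_approx (Suc m)" and "M m = (fact (Suc m) ^ Suc m :: nat)"
    and "e m = 1 / real (Suc m) + real (Suc m) / 2 ^ Suc m" for m
  have "(\<lambda>m. 1 / real m + real m / 2 ^ m) \<longlonglongrightarrow> 0" by real_asymp
  hence "e \<longlonglongrightarrow> 0" unfolding e_def by (rule LIMSEQ_Suc)
  moreover have "real (card ((S m - G3star) \<inter> {1..N})) \<le> e m * N" for m N
    unfolding S_def e_def by (rule card_approx_minus_G3star_le) simp
  moreover have "G3star \<subseteq> S m" "M m > 0" for m
    by (simp_all add: S_def M_def G3star_subset_approx)
  moreover have "k + M m \<in> S m \<longleftrightarrow> k \<in> S m" for m k
    unfolding S_def M_def by (rule G3star_approx_periodic)
  ultimately show ?thesis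
    using uniform_density_eq_density_of_periodic_approx[of G3star S M e] by blast
qed
end
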